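(* Let $c\ge2$ and let $d$ be an integer with $1\le d\le c-1$. For every $c$-uniform unoriented hypergraph $\Gamma$ with $E\neq\varnothing$ (and no isolated vertices), with smallest normalized Laplacian eigenvalue $\lambda_1$ (which satisfies $\lambda_1<1$), the $d$-proper coloring number satisfies \[ \chi_d(\Gamma)\;\ge\;\frac{c-\lambda_1}{d-\lambda_1}. \] Moreover, the bound is sharp if and only if $d\mid c$: if equality holds for some such $\Gamma$ then $d\mid c$, and conversely if $d\mid c$ then there exists a $c$-uniform unoriented hypergraph for which equality holds.
   Context: A hypergraph has finite vertex set $V$, $|V|=N$, and edge set $E\subseteq\mathcal P(V)$; it is $c$-uniform if $|e|=c$ for all $e\in E$, and unoriented means all vertex–edge incidences have orientation $+1$. The degree $\deg v=|\{e\in E: v\in e\}|$ is assumed $\ge1$; $D=\mathrm{diag}(\deg v)$. The adjacency matrix has $A_{v,v}=0$ and $A_{v,w}=-|\{e\in E: v,w\in e\}|$ for $v\ne w$; the normalized Laplacian is $L=\mathrm{Id}-D^{-1}A$ with real eigenvalues $\lambda_1\le\dots\le\lambda_N$. For an integer $d\ge1$, a $k$-coloring $V\to\{1,\dots,k\}$ is $d$-proper if every edge contains at most $d$ vertices of each color; $\chi_d(\Gamma)$ is the least $k$ admitting a $d$-proper $k$-coloring. *)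

theory Defs
  imports Complex_Main
begin

text \<open>A hypergraph is given by a finite vertex set V and an edge set E of subsets of V.
  All incidences are unoriented (orientation +1).\<close>

definition uniform_hypergraph :: "nat \<Rightarrow> 'a set \<Rightarrow> 'a set set \<Rightarrow> bool" where
  "uniform_hypergraph c V E \<longleftrightarrow> finite V \<and> E \<subseteq> Pow V \<and> (\<forall>e\<in>E. card e = c)"

definition hdeg :: "'a set set \<Rightarrow> 'a \<Rightarrow> nat" where
  "hdeg E v = card {e\<in>E. v \<in> e}"

definition no_isolated :: "'a set \<Rightarrow> 'a set set \<Rightarrow> bool" where
  "no_isolated V E \<longleftrightarrow> (\<forall>v\<in>V. hdeg E v \<ge> 1)"

definition hadj :: "'a set set \<Rightarrow> 'a \<Rightarrow> 'a \<Rightarrow> real" where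
  "hadj E v w = (if v = w then 0 else - real (card {e\<in>E. v \<in> e \<and> w \<in> e}))"

definition hlap :: "'a set set \<Rightarrow> 'a \<Rightarrow> 'a \<Rightarrow> real" where
  "hlap E v w = (if v = w then 1 else 0) - hadj E v w / real (hdeg E v)"

text \<open>Eigenvalues of L (all eigenvalues of L are real, so real eigenvectors suffice).\<close>
definition lap_eigenvalue :: "'a set \<Rightarrow> 'a set set \<Rightarrow> real \<Rightarrow> bool" where
  "lap_eigenvalue V E mu \<longleftrightarrow>
     (\<exists>f :: 'a \<Rightarrow> real. (\<exists>v\<in>V. f v \<noteq> 0) \<and>
        (\<forall>v\<in>V. (\<Sum>w\<in>V. hlap E v w * f w) = mu * f v))"

definition lambda_min :: "'a set \<Rightarrow> 'a set set \<Rightarrow> real" where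
  "lambda_min V E = Min {mu. lap_eigenvalue V E mu}"

definition d_proper_coloring :: "nat \<Rightarrow> nat \<Rightarrow> 'a set \<Rightarrow> 'a set set \<Rightarrow> ('a \<Rightarrow> nat) \<Rightarrow> bool" where
  "d_proper_coloring d k V E col \<longleftrightarrow>
     (\<forall>v\<in>V. col v \<in> {1..k}) \<and> (\<forall>e\<in>E. \<forall>i. card {v\<in>e. col v = i} \<le> d)"

definition chi_d :: "nat \<Rightarrow> 'a set \<Rightarrow> 'a set set \<Rightarrow> nat" where
  "chi_d d V E = (LEAST k. \<exists>col. d_proper_coloring d k V E col)"

end

theory Submission
  imports Defs "HOL-Analysis.Analysis" "Jordan_Normal_Form.Char_Poly"
begin

(* The smallest eigenvalue lambda_1 of L is the minimum of the Rayleigh quotient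
     R(f) = (sum_e (sum_{v in e} f v)^2) / (sum_v deg v * f(v)^2):
   a minimiser exists by compactness and is an eigenvector by a first-variation argument.
   Given a d-proper k-coloring, evaluate R on the k test functions f_i = k * 1_{col = i} - 1.
   If the colour classes of an edge e have sizes n_1, ..., n_k <= d, then
   sum_i (sum_{v in e} f_i v)^2 = k^2 sum_i n_i^2 - k c^2 <= k^2 d c - k c^2,
   while sum_i sum_v deg v f_i(v)^2 = k (k - 1) c |E|. Summing lambda_1 * den <= num over i
   gives lambda_1 (k - 1) <= k d - c, i.e. k >= (c - lambda_1) / (d - lambda_1).
   Equality forces n_i^2 = d n_i, so every colour class of every edge has size 0 or d and d | c.
   Conversely a single edge of size c has lambda_1 = 0 and a d-proper colouring with c/d colours. *)

section \<open>The spectrum and the Rayleigh quotient\<close>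

lemma finite_lap_eigenvalues:
  assumes "finite V"
  shows "finite {mu. lap_eigenvalue V E mu}"
proof -
  obtain xs where xs: "set xs = V" "distinct xs"
    using finite_distinct_list[OF assms] by blast
  define n where "n = length xs"
  define M :: "real mat" where "M = mat n n (\<lambda>(i, j). hlap E (xs ! i) (xs ! j))"
  have M: "M \<in> carrier_mat n n"
    unfolding M_def by simp
  have bij: "bij_betw ((!) xs) {..<n} V"
    using bij_betw_nth[OF xs(2)] xs(1) n_def by auto
  have "{mu. lap_eigenvalue V E mu} \<subseteq> {x. poly (char_poly M) x = 0}"
  proof
    fix mu assume "mu \<in> {mu. lap_eigenvalue V E mu}"
    then obtain f where f: "\<exists>v\<in>V. f v \<noteq> 0" "\<forall>v\<in>V. (\<Sum>w\<in>V. hlap E v w * f w) = mu * f v"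
      unfolding lap_eigenvalue_def by blast
    define u :: "real vec" where "u = vec n (\<lambda>i. f (xs ! i))"
    have "u \<noteq> 0\<^sub>v n"
      using f(1) xs(1) n_def by (auto simp: u_def in_set_conv_nth vec_eq_iff)
    moreover have "M *\<^sub>v u = mu \<cdot>\<^sub>v u"
    proof (rule eq_vecI)
      fix i assume "i < dim_vec (mu \<cdot>\<^sub>v u)"
      then have i: "i < n" by (simp add: u_def)
      have "(M *\<^sub>v u) $ i = (\<Sum>j<n. hlap E (xs ! i) (xs ! j) * f (xs ! j))"
        using i by (simp add: M_def u_def scalar_prod_def lessThan_atLeast0)
      also have "\<dots> = (\<Sum>w\<in>V. hlap E (xs ! i) w * f w)"
        using sum.reindex_bij_betw[OF bij, of "\<lambda>w. hlap E (xs ! i) w * f w"] by simp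
      also have "\<dots> = mu * f (xs ! i)"
        using f(2) i xs(1) n_def by auto
      finally show "(M *\<^sub>v u) $ i = (mu \<cdot>\<^sub>v u) $ i"
        using i by (simp add: u_def)
    qed (simp add: M_def u_def)
    moreover have "u \<in> carrier_vec n"
      by (simp add: u_def)
    ultimately have "eigenvalue M mu"
      using M unfolding eigenvalue_def eigenvector_def by blast
    then show "mu \<in> {x. poly (char_poly M) x = 0}"
      using eigenvalue_root_char_poly[OF M] by simp
  qed
  moreover have "char_poly M \<noteq> 0"
    using degree_monic_char_poly[OF M] by auto
  ultimately show ?thesis
    using poly_roots_finite finite_subset by blast
qed

definition rayleigh_num :: "'a set set \<Rightarrow> ('a \<Rightarrow> real) \<Rightarrow> real" where
  "rayleigh_num E f = (\<Sum>e\<in>E. (\<Sum>v\<in>e. f v)\<^sup>2)"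

definition rayleigh_den :: "'a set \<Rightarrow> 'a set set \<Rightarrow> ('a \<Rightarrow> real) \<Rightarrow> real" where
  "rayleigh_den V E f = (\<Sum>v\<in>V. real (hdeg E v) * (f v)\<^sup>2)"

lemma rayleigh_num_nonneg: "rayleigh_num E f \<ge> 0"
  unfolding rayleigh_num_def by (intro sum_nonneg) simp

lemma rayleigh_den_nonneg: "rayleigh_den V E f \<ge> 0"
  unfolding rayleigh_den_def by (intro sum_nonneg) simp

lemma rayleigh_num_scale: "rayleigh_num E (\<lambda>v. s * f v) = s\<^sup>2 * rayleigh_num E f"
  unfolding rayleigh_num_def by (simp add: sum_distrib_left[symmetric] power_mult_distrib)

lemma rayleigh_den_scale: "rayleigh_den V E (\<lambda>v. s * f v) = s\<^sup>2 * rayleigh_den V E f"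
  unfolding rayleigh_den_def by (simp add: sum_distrib_left power_mult_distrib algebra_simps)

lemma continuous_on_rayleigh_num: "continuous_on UNIV (rayleigh_num E)"
  unfolding rayleigh_num_def by (intro continuous_intros continuous_on_product_coordinates)

lemma continuous_on_rayleigh_den: "continuous_on UNIV (rayleigh_den V E)"
  unfolding rayleigh_den_def by (intro continuous_intros continuous_on_product_coordinates)

definition vertex_box :: "'a set \<Rightarrow> ('a \<Rightarrow> real) set" where
  "vertex_box V = Pi UNIV (\<lambda>v. if v \<in> V then {-1..1} else {0})"

lemma compact_vertex_box_rayleigh_sphere:
  "compact (vertex_box V \<inter> {f. rayleigh_den V E f = 1})"
proof (rule compact_Int_closed)
  have "compactin (product_topology (\<lambda>_. euclidean) UNIV)
          (Pi\<^sub>E UNIV (\<lambda>v. if v \<in> V then {-1..1::real} else {0}))"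
    by (subst compactin_PiE) (auto simp: compactin_euclidean_iff)
  then show "compact (vertex_box V)"
    unfolding vertex_box_def
    by (simp add: euclidean_product_topology compactin_euclidean_iff PiE_UNIV_domain)
  show "closed {f. rayleigh_den V E f = 1}"
    by (rule closed_Collect_eq[OF continuous_on_rayleigh_den continuous_on_const])
qed

lemma quadratic_nonneg_imp_linear_coeff_zero:
  fixes a b :: real
  assumes "\<And>t. 0 \<le> 2 * t * a + t\<^sup>2 * b"
  shows "a = 0"
proof (rule ccontr)
  assume "a \<noteq> 0"
  define B where "B = \<bar>b\<bar> + 1"
  have B: "B > 0" "b - 2 * B < 0"
    unfolding B_def by auto
  have "0 \<le> (2 * (- a / B) * a + (- a / B)\<^sup>2 * b) * B\<^sup>2"
    using assms[of "- a / B"] by simp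
  also have "\<dots> = a\<^sup>2 * (b - 2 * B)"
    using B by (simp add: field_simps power2_eq_square)
  also have "\<dots> < 0"
    using B \<open>a \<noteq> 0\<close> by (simp add: mult_pos_neg)
  finally show False by simp
qed

locale hypergraph =
  fixes V :: "'a set" and E :: "'a set set"
  assumes finite_vertices: "finite V"
    and edges_subset_Pow: "E \<subseteq> Pow V"
    and no_isolated_vertices: "no_isolated V E"
begin

lemma finite_edges: "finite E"
  using finite_vertices edges_subset_Pow by (meson finite_Pow_iff finite_subset)

lemma edge_subset: "e \<in> E \<Longrightarrow> e \<subseteq> V"
  using edges_subset_Pow by auto

lemma finite_edge: "e \<in> E \<Longrightarrow> finite e"
  using edge_subset finite_vertices finite_subset by blast

lemma hdeg_pos: "v \<in> V \<Longrightarrow> real (hdeg E v) > 0"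
  using no_isolated_vertices unfolding no_isolated_def by fastforce

lemma vertex_in_edge:
  assumes "v \<in> V"
  obtains e where "e \<in> E" "v \<in> e"
proof -
  have "{e\<in>E. v \<in> e} \<noteq> {}"
    using hdeg_pos[OF assms] unfolding hdeg_def by (auto simp: card_gt_0_iff)
  then show thesis
    using that by blast
qed

lemma sum_edges_swap:
  "(\<Sum>e\<in>E. \<Sum>v\<in>e. g v e) = (\<Sum>v\<in>V. \<Sum>e\<in>{e\<in>E. v \<in> e}. g v e)"
proof -
  have "(\<Sum>e\<in>E. \<Sum>v\<in>e. g v e) = (\<Sum>e\<in>E. \<Sum>v\<in>V. if v \<in> e then g v e else 0)"
  proof (rule sum.cong[OF refl])
    fix e assume "e \<in> E"
    then have "{v\<in>V. v \<in> e} = e"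
      using edge_subset by auto
    then show "(\<Sum>v\<in>e. g v e) = (\<Sum>v\<in>V. if v \<in> e then g v e else 0)"
      using sum.inter_filter[OF finite_vertices, of "\<lambda>v. g v e" "\<lambda>v. v \<in> e"] by simp
  qed
  also have "\<dots> = (\<Sum>v\<in>V. \<Sum>e\<in>E. if v \<in> e then g v e else 0)"
    by (rule sum.swap)
  also have "\<dots> = (\<Sum>v\<in>V. \<Sum>e\<in>{e\<in>E. v \<in> e}. g v e)"
    by (simp add: sum.inter_filter[OF finite_edges])
  finally show ?thesis .
qed

lemma sum_hdeg: "(\<Sum>v\<in>V. real (hdeg E v)) = (\<Sum>e\<in>E. real (card e))"
  using sum_edges_swap[of "\<lambda>v e. 1 :: real"] by (simp add: hdeg_def)

lemma hdeg_mult_lap_apply: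
  assumes "v \<in> V"
  shows "real (hdeg E v) * (\<Sum>w\<in>V. hlap E v w * f w) = (\<Sum>e\<in>{e\<in>E. v \<in> e}. \<Sum>w\<in>e. f w)"
proof -
  have codeg: "real (hdeg E v) * hlap E v w = real (card {e\<in>E. v \<in> e \<and> w \<in> e})" for w
    using hdeg_pos[OF assms] by (simp add: hlap_def hadj_def hdeg_def)
  have "(\<Sum>e\<in>{e\<in>E. v \<in> e}. \<Sum>w\<in>e. f w)
      = (\<Sum>e\<in>{e\<in>E. v \<in> e}. \<Sum>w\<in>V. if w \<in> e then f w else 0)"
  proof (rule sum.cong[OF refl])
    fix e assume "e \<in> {e\<in>E. v \<in> e}"
    then have "{w\<in>V. w \<in> e} = e"
      using edge_subset by auto
    then show "(\<Sum>w\<in>e. f w) = (\<Sum>w\<in>V. if w \<in> e then f w else 0)"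
      using sum.inter_filter[OF finite_vertices, of f "\<lambda>w. w \<in> e"] by simp
  qed
  also have "\<dots> = (\<Sum>w\<in>V. \<Sum>e\<in>{e\<in>E. v \<in> e}. if w \<in> e then f w else 0)"
    by (rule sum.swap)
  also have "\<dots> = (\<Sum>w\<in>V. real (card {e\<in>E. v \<in> e \<and> w \<in> e}) * f w)"
  proof (rule sum.cong[OF refl])
    fix w
    have "{e\<in>{e\<in>E. v \<in> e}. w \<in> e} = {e\<in>E. v \<in> e \<and> w \<in> e}"
      by auto
    then show "(\<Sum>e\<in>{e\<in>E. v \<in> e}. if w \<in> e then f w else 0)
        = real (card {e\<in>E. v \<in> e \<and> w \<in> e}) * f w"
      using sum.inter_filter[of "{e\<in>E. v \<in> e}" "\<lambda>_. f w" "\<lambda>e. w \<in> e"] finite_edges by simp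
  qed
  also have "\<dots> = real (hdeg E v) * (\<Sum>w\<in>V. hlap E v w * f w)"
    by (simp add: sum_distrib_left codeg mult.assoc[symmetric])
  finally show ?thesis ..
qed

lemma rayleigh_num_eigenvector:
  assumes "\<forall>v\<in>V. (\<Sum>w\<in>V. hlap E v w * f w) = mu * f v"
  shows "rayleigh_num E f = mu * rayleigh_den V E f"
proof -
  have "rayleigh_num E f = (\<Sum>e\<in>E. \<Sum>v\<in>e. f v * (\<Sum>w\<in>e. f w))"
    unfolding rayleigh_num_def power2_eq_square by (simp add: sum_distrib_right)
  also have "\<dots> = (\<Sum>v\<in>V. f v * (\<Sum>e\<in>{e\<in>E. v \<in> e}. \<Sum>w\<in>e. f w))"
    by (simp add: sum_edges_swap sum_distrib_left)
  also have "\<dots> = (\<Sum>v\<in>V. f v * (real (hdeg E v) * (\<Sum>w\<in>V. hlap E v w * f w)))"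
    by (rule sum.cong[OF refl]) (simp add: hdeg_mult_lap_apply)
  also have "\<dots> = (\<Sum>v\<in>V. mu * (real (hdeg E v) * (f v)\<^sup>2))"
    by (rule sum.cong[OF refl]) (simp add: assms power2_eq_square)
  also have "\<dots> = mu * rayleigh_den V E f"
    by (simp add: rayleigh_den_def sum_distrib_left)
  finally show ?thesis .
qed

lemma rayleigh_den_pos:
  assumes "v \<in> V" "f v \<noteq> 0"
  shows "rayleigh_den V E f > 0"
proof -
  have "0 < real (hdeg E v) * (f v)\<^sup>2"
    using hdeg_pos assms by simp
  also have "\<dots> \<le> rayleigh_den V E f"
    unfolding rayleigh_den_def by (rule member_le_sum[OF assms(1) _ finite_vertices]) simp
  finally show ?thesis .
qed

lemma rayleigh_num_perturb:
  "rayleigh_num E (\<lambda>w. g w + (if w = u then t else 0))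
     = rayleigh_num E g + 2 * t * (\<Sum>e\<in>{e\<in>E. u \<in> e}. \<Sum>w\<in>e. g w) + t\<^sup>2 * real (hdeg E u)"
proof -
  have edge_sums: "(\<Sum>w\<in>e. g w + (if w = u then t else 0)) = (\<Sum>w\<in>e. g w) + (if u \<in> e then t else 0)"
    if "e \<in> E" for e
    using finite_edge[OF that] by (simp add: sum.distrib)
  have "rayleigh_num E (\<lambda>w. g w + (if w = u then t else 0))
      = (\<Sum>e\<in>E. (\<Sum>w\<in>e. g w)\<^sup>2 + (if u \<in> e then 2 * t * (\<Sum>w\<in>e. g w) + t\<^sup>2 else 0))"
    unfolding rayleigh_num_def
    by (rule sum.cong[OF refl]) (auto simp: edge_sums power2_eq_square algebra_simps)
  also have "\<dots> = rayleigh_num E g + (\<Sum>e\<in>E. if u \<in> e then 2 * t * (\<Sum>w\<in>e. g w) + t\<^sup>2 else 0)"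
    unfolding rayleigh_num_def by (rule sum.distrib)
  also have "(\<Sum>e\<in>E. if u \<in> e then 2 * t * (\<Sum>w\<in>e. g w) + t\<^sup>2 else 0)
      = 2 * t * (\<Sum>e\<in>{e\<in>E. u \<in> e}. \<Sum>w\<in>e. g w) + t\<^sup>2 * real (hdeg E u)"
    by (simp add: sum.inter_filter[OF finite_edges, symmetric] sum.distrib sum_distrib_left hdeg_def)
  finally show ?thesis
    by simp
qed

lemma rayleigh_den_perturb:
  assumes "u \<in> V"
  shows "rayleigh_den V E (\<lambda>w. g w + (if w = u then t else 0))
     = rayleigh_den V E g + real (hdeg E u) * (2 * t * g u + t\<^sup>2)"
proof -
  have "rayleigh_den V E (\<lambda>w. g w + (if w = u then t else 0))
      = (\<Sum>v\<in>V. real (hdeg E v) * (g v)\<^sup>2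
                + (if v = u then real (hdeg E u) * (2 * t * g u + t\<^sup>2) else 0))"
    unfolding rayleigh_den_def by (rule sum.cong[OF refl]) (auto simp: power2_eq_square algebra_simps)
  then show ?thesis
    using assms finite_vertices by (simp add: sum.distrib rayleigh_den_def)
qed

(* First variation: perturbing g at a single vertex u by t cannot make num - rho * den negative,
   and this difference is a quadratic polynomial in t vanishing at t = 0. *)
lemma rayleigh_minimizer_eigenvector:
  assumes min: "\<And>f. rho * rayleigh_den V E f \<le> rayleigh_num E f"
    and g: "rayleigh_num E g = rho * rayleigh_den V E g"
  shows "\<forall>v\<in>V. (\<Sum>w\<in>V. hlap E v w * g w) = rho * g v"
proof
  fix u assume u: "u \<in> V"
  define A where "A = (\<Sum>e\<in>{e\<in>E. u \<in> e}. \<Sum>w\<in>e. g w)"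
  define du where "du = real (hdeg E u)"
  have "0 \<le> 2 * t * (A - rho * du * g u) + t\<^sup>2 * (du - rho * du)" for t
    using min[of "\<lambda>w. g w + (if w = u then t else 0)"] g
    unfolding rayleigh_num_perturb rayleigh_den_perturb[OF u] A_def[symmetric] du_def[symmetric]
    by (simp add: algebra_simps)
  then have "A = rho * du * g u"
    using quadratic_nonneg_imp_linear_coeff_zero by fastforce
  then have "du * (\<Sum>w\<in>V. hlap E u w * g w) = du * (rho * g u)"
    using hdeg_mult_lap_apply[OF u] unfolding A_def du_def by simp
  then show "(\<Sum>w\<in>V. hlap E u w * g w) = rho * g u"
    using hdeg_pos[OF u] unfolding du_def by simp
qed

lemma rayleigh_normalize:
  assumes pos: "rayleigh_den V E f > 0"
  obtains y where "y \<in> vertex_box V" "rayleigh_den V E y = 1"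
    and "rayleigh_num E y * rayleigh_den V E f = rayleigh_num E f"
proof -
  define f0 where "f0 v = (if v \<in> V then f v else 0)" for v
  define s where "s = 1 / sqrt (rayleigh_den V E f)"
  define y where "y v = s * f0 v" for v
  have "rayleigh_num E f0 = rayleigh_num E f"
    unfolding rayleigh_num_def f0_def
    by (intro sum.cong arg_cong[where f = "\<lambda>x. x\<^sup>2"] refl) (use edge_subset in auto)
  moreover have "rayleigh_den V E f0 = rayleigh_den V E f"
    unfolding rayleigh_den_def f0_def by (intro sum.cong) auto
  moreover have "s\<^sup>2 = 1 / rayleigh_den V E f"
    unfolding s_def using pos by (simp add: power_divide)
  ultimately have num_y: "rayleigh_num E y * rayleigh_den V E f = rayleigh_num E f"
    and den_y: "rayleigh_den V E y = 1"
    using pos unfolding y_def rayleigh_num_scale rayleigh_den_scale by simp_all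
  have "\<bar>y v\<bar> \<le> 1" if "v \<in> V" for v
  proof -
    have "(y v)\<^sup>2 \<le> real (hdeg E v) * (y v)\<^sup>2"
      using hdeg_pos[OF that] no_isolated_vertices that by (simp add: mult_le_cancel_right1 no_isolated_def)
    also have "\<dots> \<le> rayleigh_den V E y"
      unfolding rayleigh_den_def by (rule member_le_sum[OF that _ finite_vertices]) simp
    finally show ?thesis
      using den_y by (simp add: abs_square_le_1)
  qed
  then have "y \<in> vertex_box V"
    unfolding vertex_box_def by (auto simp: y_def f0_def abs_le_iff)
  then show thesis
    using that den_y num_y by blast
qed

lemma rayleigh_minimizer_exists:
  assumes "V \<noteq> {}"
  obtains g where "rayleigh_den V E g = 1"
    and "\<And>f. rayleigh_num E g * rayleigh_den V E f \<le> rayleigh_num E f"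
proof -
  define K where "K = vertex_box V \<inter> {f. rayleigh_den V E f = 1}"
  obtain v0 where "v0 \<in> V"
    using assms by blast
  then have "rayleigh_den V E (\<lambda>v. if v = v0 then 1 else 0) > 0"
    by (rule rayleigh_den_pos) simp
  then obtain y0 where "y0 \<in> vertex_box V" "rayleigh_den V E y0 = 1"
    by (rule rayleigh_normalize)
  then have "K \<noteq> {}"
    unfolding K_def by blast
  then obtain g where "g \<in> K" and g_min: "\<And>y. y \<in> K \<Longrightarrow> rayleigh_num E g \<le> rayleigh_num E y"
    using continuous_attains_inf[OF compact_vertex_box_rayleigh_sphere[of V E, folded K_def] _
        continuous_on_subset[OF continuous_on_rayleigh_num]] by blast
  have "rayleigh_num E g * rayleigh_den V E f \<le> rayleigh_num E f" for f
  proof (cases "rayleigh_den V E f = 0")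
    case True
    then show ?thesis
      using rayleigh_num_nonneg by simp
  next
    case False
    then have pos: "rayleigh_den V E f > 0"
      using rayleigh_den_nonneg order_le_neq_trans by metis
    then obtain y where "y \<in> vertex_box V" "rayleigh_den V E y = 1"
      and num_y: "rayleigh_num E y * rayleigh_den V E f = rayleigh_num E f"
      by (rule rayleigh_normalize)
    then have "y \<in> K"
      unfolding K_def by blast
    then show ?thesis
      using g_min[of y] pos num_y by (metis mult_right_mono less_imp_le)
  qed
  moreover have "rayleigh_den V E g = 1"
    using \<open>g \<in> K\<close> unfolding K_def by simp
  ultimately show thesis
    using that by blast
qed

lemma lambda_min_eq_rayleigh_min:
  assumes "V \<noteq> {}"
  obtains g where "rayleigh_den V E g = 1" "rayleigh_num E g = lambda_min V E"
    and "\<And>f. lambda_min V E * rayleigh_den V E f \<le> rayleigh_num E f"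
proof -
  obtain g where g1: "rayleigh_den V E g = 1"
    and g_min: "\<And>f. rayleigh_num E g * rayleigh_den V E f \<le> rayleigh_num E f"
    using rayleigh_minimizer_exists[OF assms] by blast
  define rho where "rho = rayleigh_num E g"
  have "lap_eigenvalue V E rho"
    unfolding lap_eigenvalue_def
  proof (intro exI conjI)
    show "\<exists>v\<in>V. g v \<noteq> 0"
    proof (rule ccontr)
      assume "\<not> (\<exists>v\<in>V. g v \<noteq> 0)"
      then have "rayleigh_den V E g = 0"
        unfolding rayleigh_den_def by simp
      with g1 show False
        by simp
    qed
    show "\<forall>v\<in>V. (\<Sum>w\<in>V. hlap E v w * g w) = rho * g v"
      by (rule rayleigh_minimizer_eigenvector) (use g_min g1 rho_def in auto)
  qed
  moreover have "rho \<le> mu" if eig: "lap_eigenvalue V E mu" for mu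
  proof -
    obtain f v where "v \<in> V" "f v \<noteq> 0" and "\<forall>v\<in>V. (\<Sum>w\<in>V. hlap E v w * f w) = mu * f v"
      using eig unfolding lap_eigenvalue_def by blast
    then have "rayleigh_den V E f > 0" "rayleigh_num E f = mu * rayleigh_den V E f"
      using rayleigh_den_pos rayleigh_num_eigenvector by auto
    then show ?thesis
      using g_min[of f] unfolding rho_def by simp
  qed
  ultimately have "lambda_min V E = rho"
    unfolding lambda_min_def by (intro Min_eqI finite_lap_eigenvalues finite_vertices) auto
  then show thesis
    using that g1 g_min rho_def by auto
qed

lemma lambda_min_le_rayleigh:
  "V \<noteq> {} \<Longrightarrow> lambda_min V E * rayleigh_den V E f \<le> rayleigh_num E f"
  by (metis lambda_min_eq_rayleigh_min)

lemma lambda_min_nonneg: "V \<noteq> {} \<Longrightarrow> lambda_min V E \<ge> 0"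
  by (metis lambda_min_eq_rayleigh_min rayleigh_num_nonneg)

lemma lambda_min_lt_1:
  assumes "e \<in> E" "card e \<ge> 2"
  shows "lambda_min V E < 1"
proof -
  obtain u w where uw: "u \<in> e" "w \<in> e" "u \<noteq> w"
  proof -
    have "\<not> card e \<le> Suc 0"
      using assms(2) by simp
    then show thesis
      using that card_le_Suc0_iff_eq[OF finite_edge[OF assms(1)]] by blast
  qed
  then have "u \<in> V" "w \<in> V"
    using edge_subset[OF assms(1)] by auto
  define f :: "'a \<Rightarrow> real" where "f v = of_bool (v = u) - of_bool (v = w)" for v
  have sum_f: "(\<Sum>v\<in>e'. f v) = of_bool (u \<in> e') - of_bool (w \<in> e')" if "e' \<in> E" for e'
    using finite_edge[OF that] by (simp add: f_def sum_subtractf)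
  have "rayleigh_num E f = (\<Sum>e'\<in>E. (of_bool (u \<in> e') - of_bool (w \<in> e'))\<^sup>2)"
    unfolding rayleigh_num_def by (rule sum.cong[OF refl]) (simp add: sum_f)
  also have "\<dots> < (\<Sum>e'\<in>E. of_bool (u \<in> e') + of_bool (w \<in> e'))"
    by (rule sum_strict_mono_ex1[OF finite_edges]) (use assms(1) uw in auto)
  also have "\<dots> = real (hdeg E u) + real (hdeg E w)"
    using finite_edges by (simp add: sum.distrib hdeg_def Int_def)
  also have "\<dots> = rayleigh_den V E f"
  proof -
    have "real (hdeg E v) * (f v)\<^sup>2
        = (if v = u then real (hdeg E u) else 0) + (if v = w then real (hdeg E w) else 0)" for v
      using uw(3) by (cases "v = u"; cases "v = w") (simp_all add: f_def)
    then show ?thesis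
      using \<open>u \<in> V\<close> \<open>w \<in> V\<close> finite_vertices by (simp add: rayleigh_den_def sum.distrib)
  qed
  finally have "rayleigh_num E f < rayleigh_den V E f" .
  moreover have "lambda_min V E * rayleigh_den V E f \<le> rayleigh_num E f"
    using lambda_min_le_rayleigh \<open>u \<in> V\<close> by blast
  moreover have "rayleigh_den V E f > 0"
    using rayleigh_den_pos[OF \<open>u \<in> V\<close>] uw(3) by (simp add: f_def)
  ultimately have "lambda_min V E * rayleigh_den V E f < 1 * rayleigh_den V E f"
    by linarith
  then show ?thesis
    using \<open>rayleigh_den V E f > 0\<close> by (simp only: mult_less_cancel_right_pos)
qed

end

section \<open>Colourings\<close>

lemma card_eq_sum_color_classes:
  fixes \<kappa> :: "'a \<Rightarrow> nat"
  assumes "finite e" "\<forall>v\<in>e. \<kappa> v \<in> {1..k}"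
  shows "card e = (\<Sum>i\<in>{1..k}. card {v\<in>e. \<kappa> v = i})"
proof -
  have "card e = (\<Sum>v\<in>e. \<Sum>i\<in>{1..k}. if \<kappa> v = i then 1 else 0)"
    using assms(2) by (simp add: eq_commute[of "\<kappa> _"])
  also have "\<dots> = (\<Sum>i\<in>{1..k}. \<Sum>v\<in>e. if \<kappa> v = i then 1 else 0)"
    by (rule sum.swap)
  also have "\<dots> = (\<Sum>i\<in>{1..k}. card {v\<in>e. \<kappa> v = i})"
    by (rule sum.cong[OF refl]) (simp add: sum.inter_filter[OF assms(1), symmetric])
  finally show ?thesis .
qed

lemma sum_color_class_sq_le:
  fixes \<kappa> :: "'a \<Rightarrow> nat"
  assumes "finite e" "\<forall>v\<in>e. \<kappa> v \<in> {1..k}" "\<forall>i. card {v\<in>e. \<kappa> v = i} \<le> d"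
  shows "(\<Sum>i\<in>{1..k}. (card {v\<in>e. \<kappa> v = i})\<^sup>2) \<le> d * card e"
proof -
  have "(\<Sum>i\<in>{1..k}. (card {v\<in>e. \<kappa> v = i})\<^sup>2) \<le> (\<Sum>i\<in>{1..k}. d * card {v\<in>e. \<kappa> v = i})"
    unfolding power2_eq_square using assms(3) by (intro sum_mono mult_le_mono1) blast
  also have "\<dots> = d * card e"
    using card_eq_sum_color_classes[OF assms(1,2)] by (simp add: sum_distrib_left)
  finally show ?thesis .
qed

lemma dvd_card_if_sum_color_class_sq_eq:
  fixes \<kappa> :: "'a \<Rightarrow> nat"
  assumes "finite e" "\<forall>v\<in>e. \<kappa> v \<in> {1..k}" "\<forall>i. card {v\<in>e. \<kappa> v = i} \<le> d"
    and eq: "(\<Sum>i\<in>{1..k}. (card {v\<in>e. \<kappa> v = i})\<^sup>2) = d * card e"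
  shows "d dvd card e"
proof -
  have class_sq: "card {v\<in>e. \<kappa> v = i} * card {v\<in>e. \<kappa> v = i} = d * card {v\<in>e. \<kappa> v = i}"
    if "i \<in> {1..k}" for i
  proof (rule sum_mono_inv[OF _ _ that])
    show "(\<Sum>i\<in>{1..k}. card {v\<in>e. \<kappa> v = i} * card {v\<in>e. \<kappa> v = i})
        = (\<Sum>i\<in>{1..k}. d * card {v\<in>e. \<kappa> v = i})"
      using eq card_eq_sum_color_classes[OF assms(1,2)] by (simp add: sum_distrib_left power2_eq_square)
    show "card {v\<in>e. \<kappa> v = j} * card {v\<in>e. \<kappa> v = j} \<le> d * card {v\<in>e. \<kappa> v = j}" for j
      using assms(3) by (intro mult_le_mono1) blast
  qed simp
  have "d dvd card {v\<in>e. \<kappa> v = i}" if "i \<in> {1..k}" for i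
  proof -
    have "card {v\<in>e. \<kappa> v = i} = 0 \<or> card {v\<in>e. \<kappa> v = i} = d"
      using class_sq[OF that] by auto
    then show ?thesis
      by auto
  qed
  then have "d dvd (\<Sum>i\<in>{1..k}. card {v\<in>e. \<kappa> v = i})"
    by (rule dvd_sum)
  then show ?thesis
    using card_eq_sum_color_classes[OF assms(1,2)] by simp
qed

definition color_test :: "nat \<Rightarrow> ('a \<Rightarrow> nat) \<Rightarrow> nat \<Rightarrow> 'a \<Rightarrow> real" where
  "color_test k \<kappa> i v = real k * of_bool (\<kappa> v = i) - 1"

lemma sum_color_test_sq:
  fixes \<kappa> :: "'a \<Rightarrow> nat"
  assumes "finite e" "\<forall>v\<in>e. \<kappa> v \<in> {1..k}"
  shows "(\<Sum>i\<in>{1..k}. (\<Sum>v\<in>e. color_test k \<kappa> i v)\<^sup>2)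
           = (real k)\<^sup>2 * real (\<Sum>i\<in>{1..k}. (card {v\<in>e. \<kappa> v = i})\<^sup>2) - real k * (real (card e))\<^sup>2"
proof -
  define n where "n i = real (card {v\<in>e. \<kappa> v = i})" for i
  have sums: "(\<Sum>v\<in>e. color_test k \<kappa> i v) = real k * n i - real (card e)" for i
    using assms(1) by (simp add: color_test_def sum_subtractf sum_distrib_left[symmetric] n_def Int_def)
  have total: "(\<Sum>i\<in>{1..k}. n i) = real (card e)"
    unfolding n_def by (subst card_eq_sum_color_classes[OF assms]) simp
  have "(\<Sum>i\<in>{1..k}. (\<Sum>v\<in>e. color_test k \<kappa> i v)\<^sup>2)
      = (\<Sum>i\<in>{1..k}. (real k)\<^sup>2 * (n i)\<^sup>2 - 2 * real k * real (card e) * n i + (real (card e))\<^sup>2)"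
    by (rule sum.cong[OF refl]) (simp add: sums power2_diff power_mult_distrib)
  also have "\<dots> = (real k)\<^sup>2 * (\<Sum>i\<in>{1..k}. (n i)\<^sup>2)
      - 2 * real k * real (card e) * (\<Sum>i\<in>{1..k}. n i) + real k * (real (card e))\<^sup>2"
    by (simp add: sum.distrib sum_subtractf sum_distrib_left)
  also have "\<dots> = (real k)\<^sup>2 * real (\<Sum>i\<in>{1..k}. (card {v\<in>e. \<kappa> v = i})\<^sup>2) - real k * (real (card e))\<^sup>2"
    using total unfolding n_def by (simp add: power2_eq_square algebra_simps)
  finally show ?thesis .
qed

context hypergraph
begin

lemma sum_rayleigh_den_color_test:
  assumes unif: "\<forall>e\<in>E. card e = c" and \<kappa>: "\<forall>v\<in>V. \<kappa> v \<in> {1..k}"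
  shows "(\<Sum>i\<in>{1..k}. rayleigh_den V E (color_test k \<kappa> i))
           = real k * (real k - 1) * real c * real (card E)"
proof -
  have squares: "(\<Sum>i\<in>{1..k}. (color_test k \<kappa> i v)\<^sup>2) = real k * (real k - 1)" if "v \<in> V" for v
  proof -
    have "(\<Sum>i\<in>{1..k}. (color_test k \<kappa> i v)\<^sup>2)
        = (\<Sum>i\<in>{1..k}. (if i = \<kappa> v then (real k)\<^sup>2 - 2 * real k else 0) + 1)"
      by (rule sum.cong[OF refl]) (auto simp: color_test_def power2_eq_square algebra_simps)
    then show ?thesis
      using \<kappa> that by (simp add: sum.distrib power2_eq_square algebra_simps)
  qed
  have "(\<Sum>i\<in>{1..k}. rayleigh_den V E (color_test k \<kappa> i))
      = (\<Sum>v\<in>V. real (hdeg E v) * (\<Sum>i\<in>{1..k}. (color_test k \<kappa> i v)\<^sup>2))"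
    unfolding rayleigh_den_def by (subst sum.swap) (simp add: sum_distrib_left)
  also have "\<dots> = (\<Sum>v\<in>V. real (hdeg E v) * (real k * (real k - 1)))"
    by (rule sum.cong[OF refl]) (metis squares)
  also have "\<dots> = (\<Sum>v\<in>V. real (hdeg E v)) * (real k * (real k - 1))"
    by (rule sum_distrib_right[symmetric])
  also have "\<dots> = real k * (real k - 1) * real c * real (card E)"
    using unif by (simp add: sum_hdeg)
  finally show ?thesis .
qed

lemma sum_rayleigh_num_color_test:
  assumes unif: "\<forall>e\<in>E. card e = c" and col: "\<forall>v\<in>V. \<kappa> v \<in> {1..k}"
  shows "(\<Sum>i\<in>{1..k}. rayleigh_num E (color_test k \<kappa> i))
           = (real k)\<^sup>2 * (\<Sum>e\<in>E. real (\<Sum>i\<in>{1..k}. (card {v\<in>e. \<kappa> v = i})\<^sup>2))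
             - real k * (real c)\<^sup>2 * real (card E)"
proof -
  have "(\<Sum>i\<in>{1..k}. rayleigh_num E (color_test k \<kappa> i))
      = (\<Sum>e\<in>E. \<Sum>i\<in>{1..k}. (\<Sum>v\<in>e. color_test k \<kappa> i v)\<^sup>2)"
    unfolding rayleigh_num_def by (rule sum.swap)
  also have "\<dots> = (\<Sum>e\<in>E. (real k)\<^sup>2 * real (\<Sum>i\<in>{1..k}. (card {v\<in>e. \<kappa> v = i})\<^sup>2)
                              - real k * (real c)\<^sup>2)"
  proof (rule sum.cong[OF refl])
    fix e assume "e \<in> E"
    then have "\<forall>v\<in>e. \<kappa> v \<in> {1..k}"
      using col edge_subset by blast
    then have "(\<Sum>i\<in>{1..k}. (\<Sum>v\<in>e. color_test k \<kappa> i v)\<^sup>2)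
        = (real k)\<^sup>2 * real (\<Sum>i\<in>{1..k}. (card {v\<in>e. \<kappa> v = i})\<^sup>2) - real k * (real (card e))\<^sup>2"
      by (rule sum_color_test_sq[OF finite_edge[OF \<open>e \<in> E\<close>]])
    then show "(\<Sum>i\<in>{1..k}. (\<Sum>v\<in>e. color_test k \<kappa> i v)\<^sup>2)
        = (real k)\<^sup>2 * real (\<Sum>i\<in>{1..k}. (card {v\<in>e. \<kappa> v = i})\<^sup>2) - real k * (real c)\<^sup>2"
      using unif \<open>e \<in> E\<close> by simp
  qed
  also have "\<dots> = (real k)\<^sup>2 * (\<Sum>e\<in>E. real (\<Sum>i\<in>{1..k}. (card {v\<in>e. \<kappa> v = i})\<^sup>2))
                   - real k * (real c)\<^sup>2 * real (card E)"
    unfolding sum_subtractf by (simp add: sum_distrib_left mult_ac)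
  finally show ?thesis .
qed

lemma d_proper_coloring_bound:
  assumes unif: "\<forall>e\<in>E. card e = c" and "V \<noteq> {}" and \<kappa>: "d_proper_coloring d k V E \<kappa>"
  shows "lambda_min V E * (real k - 1) \<le> real k * real d - real c"
    and "lambda_min V E * (real k - 1) = real k * real d - real c \<Longrightarrow> d dvd c"
proof -
  define lam where "lam = lambda_min V E"
  define s where "s e = (\<Sum>i\<in>{1..k}. (card {v\<in>e. \<kappa> v = i})\<^sup>2)" for e
  define S where "S = (\<Sum>e\<in>E. real (s e))"
  define N where "N = real k * real c * real (card E)"
  have colV: "\<forall>v\<in>V. \<kappa> v \<in> {1..k}" and proper: "\<forall>e\<in>E. \<forall>i. card {v\<in>e. \<kappa> v = i} \<le> d"
    using \<kappa> unfolding d_proper_coloring_def by auto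
  have cole: "\<forall>v\<in>e. \<kappa> v \<in> {1..k}" if "e \<in> E" for e
    using colV edge_subset[OF that] by auto
  obtain v e where "v \<in> V" "e \<in> E" "v \<in> e"
    using \<open>V \<noteq> {}\<close> vertex_in_edge by blast
  have "k \<ge> 1"
    using colV \<open>v \<in> V\<close> by fastforce
  moreover have "c > 0"
    using finite_edge[OF \<open>e \<in> E\<close>] \<open>v \<in> e\<close> unif \<open>e \<in> E\<close> by (metis card_gt_0_iff empty_iff)
  moreover have "card E > 0"
    using finite_edges \<open>e \<in> E\<close> card_gt_0_iff by blast
  ultimately have "N > 0"
    by (simp add: N_def)
  have s_le: "s e \<le> d * c" if "e \<in> E" for e
    using sum_color_class_sq_le[OF finite_edge[OF that] cole[OF that]] proper unif that
    unfolding s_def by simp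
  have "(\<Sum>i\<in>{1..k}. lam * rayleigh_den V E (color_test k \<kappa> i))
      \<le> (\<Sum>i\<in>{1..k}. rayleigh_num E (color_test k \<kappa> i))"
    unfolding lam_def using lambda_min_le_rayleigh[OF \<open>V \<noteq> {}\<close>] by (rule sum_mono)
  then have "lam * (real k * (real k - 1) * real c * real (card E))
      \<le> (real k)\<^sup>2 * S - real k * (real c)\<^sup>2 * real (card E)"
    unfolding sum_distrib_left[symmetric] sum_rayleigh_den_color_test[OF unif colV]
      sum_rayleigh_num_color_test[OF unif colV] S_def s_def .
  moreover have "lam * (real k * (real k - 1) * real c * real (card E)) = N * (lam * (real k - 1))"
    and "real k * (real c)\<^sup>2 * real (card E) = N * real c"
    by (simp_all add: N_def power2_eq_square algebra_simps)
  ultimately have tested: "N * (lam * (real k - 1)) \<le> (real k)\<^sup>2 * S - N * real c"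
    by linarith
  have "S \<le> (\<Sum>e\<in>E. real (d * c))"
    unfolding S_def by (intro sum_mono) (metis of_nat_le_iff s_le)
  then have "(real k)\<^sup>2 * S \<le> (real k)\<^sup>2 * (real d * real c * real (card E))"
    by (intro mult_left_mono) (simp_all add: mult_ac)
  also have "\<dots> = N * (real k * real d)"
    by (simp add: N_def power2_eq_square algebra_simps)
  finally have k2S: "(real k)\<^sup>2 * S \<le> N * (real k * real d)" .
  with tested have "N * (lam * (real k - 1)) \<le> N * (real k * real d - real c)"
    by (simp add: right_diff_distrib)
  then show "lambda_min V E * (real k - 1) \<le> real k * real d - real c"
    using \<open>N > 0\<close> unfolding lam_def by (simp add: mult_le_cancel_left_pos)
  show "d dvd c" if eq: "lambda_min V E * (real k - 1) = real k * real d - real c"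
  proof -
    have "N * (lam * (real k - 1)) = N * (real k * real d) - N * real c"
      using eq unfolding lam_def[symmetric] by (metis right_diff_distrib)
    then have "N * (real k * real d) \<le> (real k)\<^sup>2 * S"
      using tested by linarith
    with k2S have "(real k)\<^sup>2 * S = N * (real k * real d)"
      by linarith
    also have "\<dots> = (real k)\<^sup>2 * (real d * real c * real (card E))"
      by (simp add: N_def power2_eq_square algebra_simps)
    finally have "(real k)\<^sup>2 * S = (real k)\<^sup>2 * (real d * real c * real (card E))" .
    then have "(\<Sum>e\<in>E. real (s e)) = (\<Sum>e\<in>E. real (d * c))"
      using \<open>k \<ge> 1\<close> unfolding S_def by (simp add: mult_ac)
    then have "real (s e) = real (d * c)"
      by (rule sum_mono_inv[OF _ _ \<open>e \<in> E\<close> finite_edges]) (metis of_nat_le_iff s_le)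
    then have "(\<Sum>i\<in>{1..k}. (card {v\<in>e. \<kappa> v = i})\<^sup>2) = d * card e"
      using unif \<open>e \<in> E\<close> unfolding s_def of_nat_eq_iff by simp
    then show ?thesis
      using dvd_card_if_sum_color_class_sq_eq[OF finite_edge[OF \<open>e \<in> E\<close>] cole[OF \<open>e \<in> E\<close>]]
        proper unif \<open>e \<in> E\<close> by simp
  qed
qed

lemma d_proper_coloring_chi_d:
  assumes "d \<ge> 1"
  obtains \<kappa> where "d_proper_coloring d (chi_d d V E) V E \<kappa>"
proof -
  obtain h where h: "bij_betw h V {0..<card V}"
    using ex_bij_betw_finite_nat[OF finite_vertices] by blast
  have "d_proper_coloring d (card V) V E (\<lambda>v. h v + 1)"
    unfolding d_proper_coloring_def
  proof (intro conjI ballI allI)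
    fix v assume "v \<in> V"
    then have "h v < card V"
      using bij_betw_apply[OF h] by fastforce
    then show "h v + 1 \<in> {1..card V}"
      by simp
  next
    fix e i assume "e \<in> E"
    then have "inj_on h e"
      using bij_betw_imp_inj_on[OF h] edge_subset inj_on_subset by blast
    then have "card {v\<in>e. h v + 1 = i} \<le> Suc 0"
      using finite_edge[OF \<open>e \<in> E\<close>] by (subst card_le_Suc0_iff_eq) (auto simp: inj_on_def)
    then show "card {v\<in>e. h v + 1 = i} \<le> d"
      using assms by simp
  qed
  then have "\<exists>k \<kappa>. d_proper_coloring d k V E \<kappa>"
    by blast
  then have "\<exists>\<kappa>. d_proper_coloring d (chi_d d V E) V E \<kappa>"
    unfolding chi_d_def by (rule LeastI_ex)
  then show thesis
    using that by blast
qed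

end

lemma hypergraph_if_uniform:
  "uniform_hypergraph c V E \<Longrightarrow> no_isolated V E \<Longrightarrow> hypergraph V E"
  unfolding uniform_hypergraph_def by unfold_locales auto

lemma chi_d_lower_bound:
  assumes H: "uniform_hypergraph c V E" "no_isolated V E" "E \<noteq> {}"
    and "c \<ge> 2" "d \<ge> 1"
  shows "lambda_min V E < 1"
    and "(real c - lambda_min V E) / (real d - lambda_min V E) \<le> real (chi_d d V E)"
    and "real (chi_d d V E) = (real c - lambda_min V E) / (real d - lambda_min V E) \<Longrightarrow> d dvd c"
proof -
  interpret hypergraph V E
    using hypergraph_if_uniform[OF H(1,2)] .
  have unif: "\<forall>e\<in>E. card e = c"
    using H(1) unfolding uniform_hypergraph_def by blast
  obtain e where "e \<in> E"
    using H(3) by blast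
  then have "V \<noteq> {}"
    using unif \<open>c \<ge> 2\<close> edge_subset by fastforce
  show "lambda_min V E < 1"
    using lambda_min_lt_1[OF \<open>e \<in> E\<close>] unif \<open>e \<in> E\<close> \<open>c \<ge> 2\<close> by simp
  then have "real d - lambda_min V E > 0"
    using \<open>d \<ge> 1\<close> by linarith
  moreover obtain \<kappa> where \<kappa>: "d_proper_coloring d (chi_d d V E) V E \<kappa>"
    using d_proper_coloring_chi_d[OF \<open>d \<ge> 1\<close>] .
  note bound = d_proper_coloring_bound[OF unif \<open>V \<noteq> {}\<close> \<kappa>]
  ultimately show "(real c - lambda_min V E) / (real d - lambda_min V E) \<le> real (chi_d d V E)"
    using bound(1) by (simp add: divide_le_eq algebra_simps)
  show "d dvd c" if "real (chi_d d V E) = (real c - lambda_min V E) / (real d - lambda_min V E)"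
    using that \<open>real d - lambda_min V E > 0\<close> bound(2) by (simp add: field_simps)
qed

section \<open>Sharpness\<close>

lemma hypergraph_single_edge: "hypergraph {0..<c} {{0..<c::nat}}"
proof
  show "no_isolated {0..<c} {{0..<c}}"
    unfolding no_isolated_def hdeg_def
  proof
    fix v assume "v \<in> {0..<c}"
    then have "{e\<in>{{0..<c}}. v \<in> e} = {{0..<c}}"
      by auto
    then show "card {e\<in>{{0..<c}}. v \<in> e} \<ge> 1"
      by simp
  qed
qed auto

lemma uniform_single_edge: "uniform_hypergraph c {0..<c} {{0..<c::nat}}"
  unfolding uniform_hypergraph_def by simp

lemma lambda_min_single_edge:
  assumes "c \<ge> 2"
  shows "lambda_min {0..<c} {{0..<c::nat}} = 0"
proof -
  interpret hypergraph "{0..<c}" "{{0..<c::nat}}"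
    by (rule hypergraph_single_edge)
  define f :: "nat \<Rightarrow> real" where "f v = (if v = 0 then 1 else 0) - (if v = 1 then 1 else 0)" for v
  have "{0..<c} \<noteq> {}"
    using assms by simp
  have "rayleigh_num {{0..<c}} f = 0"
    using assms by (simp add: rayleigh_num_def f_def sum_subtractf)
  then have "lambda_min {0..<c} {{0..<c}} * rayleigh_den {0..<c} {{0..<c}} f \<le> 0"
    using lambda_min_le_rayleigh[OF \<open>{0..<c} \<noteq> {}\<close>] by metis
  moreover have "rayleigh_den {0..<c} {{0..<c}} f > 0"
    using assms by (intro rayleigh_den_pos[of 0]) (auto simp: f_def)
  ultimately have "lambda_min {0..<c} {{0..<c}} \<le> 0"
    by (simp add: mult_le_0_iff)
  then show ?thesis
    using lambda_min_nonneg[OF \<open>{0..<c} \<noteq> {}\<close>] by simp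
qed

lemma chi_d_single_edge_le:
  assumes "d \<ge> 1" "d dvd c"
  shows "chi_d d {0..<c} {{0..<c::nat}} \<le> c div d"
proof -
  have "d_proper_coloring d (c div d) {0..<c} {{0..<c}} (\<lambda>v. v div d + 1)"
    unfolding d_proper_coloring_def
  proof (intro conjI ballI allI)
    fix v assume "v \<in> {0..<c}"
    then have "v < c div d * d"
      using dvd_div_mult_self[OF assms(2)] by simp
    then have "v div d < c div d"
      by (rule less_mult_imp_div_less)
    then show "v div d + 1 \<in> {1..c div d}"
      by simp
  next
    fix e i assume "e \<in> {{0..<c}}"
    have "{v\<in>e. v div d + 1 = i} \<subseteq> {(i - 1) * d..<(i - 1) * d + d}"
    proof
      fix v assume "v \<in> {v\<in>e. v div d + 1 = i}"
      then have "v div d = i - 1"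
        by auto
      moreover have "v div d * d \<le> v"
        by (rule div_times_less_eq_dividend)
      moreover have "v < v div d * d + d"
        using div_mult_mod_eq[of v d] mod_less_divisor[of d v] assms(1) by linarith
      ultimately show "v \<in> {(i - 1) * d..<(i - 1) * d + d}"
        by simp
    qed
    then have "card {v\<in>e. v div d + 1 = i} \<le> card {(i - 1) * d..<(i - 1) * d + d}"
      by (rule card_mono[rotated]) simp
    then show "card {v\<in>e. v div d + 1 = i} \<le> d"
      by simp
  qed
  then show ?thesis
    unfolding chi_d_def by (blast intro: Least_le)
qed

lemma chi_d_single_edge:
  assumes "c \<ge> 2" "d \<ge> 1" "d dvd c"
  shows "real (chi_d d {0..<c} {{0..<c::nat}})
           = (real c - lambda_min {0..<c} {{0..<c}}) / (real d - lambda_min {0..<c} {{0..<c}})"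
proof -
  have "real (chi_d d {0..<c} {{0..<c}}) \<le> real c / real d"
    using chi_d_single_edge_le[OF assms(2,3)] real_of_nat_div[OF assms(3)] by simp
  moreover have "real c / real d \<le> real (chi_d d {0..<c} {{0..<c}})"
    using chi_d_lower_bound(2)[OF uniform_single_edge hypergraph.no_isolated_vertices[OF hypergraph_single_edge]
        _ assms(1,2)] lambda_min_single_edge[OF assms(1)] by simp
  ultimately show ?thesis
    using lambda_min_single_edge[OF assms(1)] by simp
qed

theorem mainTheorem6:
  fixes c d :: nat
  assumes "c \<ge> 2" and "1 \<le> d" and "d \<le> c - 1"
  shows "(\<forall>(V :: 'a set) E. uniform_hypergraph c V E \<and> no_isolated V E \<and> E \<noteq> {} \<longrightarrow>
            lambda_min V E < 1 \<and>
            real (chi_d d V E) \<ge> (real c - lambda_min V E) / (real d - lambda_min V E))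
       \<and> ((\<exists>(V :: 'a set) E. uniform_hypergraph c V E \<and> no_isolated V E \<and> E \<noteq> {} \<and>
            real (chi_d d V E) = (real c - lambda_min V E) / (real d - lambda_min V E)) \<longrightarrow> d dvd c)
       \<and> (d dvd c \<longrightarrow> (\<exists>(V :: nat set) E. uniform_hypergraph c V E \<and> no_isolated V E \<and> E \<noteq> {} \<and>
            real (chi_d d V E) = (real c - lambda_min V E) / (real d - lambda_min V E)))"
proof -
  have "lambda_min V E < 1"
    and "(real c - lambda_min V E) / (real d - lambda_min V E) \<le> real (chi_d d V E)"
    and "real (chi_d d V E) = (real c - lambda_min V E) / (real d - lambda_min V E) \<Longrightarrow> d dvd c"
    if "uniform_hypergraph c V E \<and> no_isolated V E \<and> E \<noteq> {}" for V :: "'a set" and E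
    using chi_d_lower_bound[of c V E d] that assms(1,2) by auto
  moreover have "\<exists>(V :: nat set) E. uniform_hypergraph c V E \<and> no_isolated V E \<and> E \<noteq> {} \<and>
            real (chi_d d V E) = (real c - lambda_min V E) / (real d - lambda_min V E)"
    if "d dvd c"
    using chi_d_single_edge[OF assms(1,2) that] uniform_single_edge
      hypergraph.no_isolated_vertices[OF hypergraph_single_edge] by blast
  ultimately show ?thesis
    by blast
qed

end
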